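(* There is a family $(s_n)_{n\ge1}$ of unranked ordered labeled trees such that $|\mathrm{dag}(s_n)| > \frac16 |\mathrm{hdag}(s_n)|^2$ for all $n\ge 1$.
   Context: An unranked tree over a finite alphabet $\Sigma$ is a finite rooted tree with nodes labeled in $\Sigma$ and linearly ordered children. $\mathrm{dag}(t)$ is the minimal dag of $t$: its nodes are the distinct subtrees of $t$, the node of a subtree $f(s_1,\dots,s_k)$ having $k$ ordered edges to the nodes of $s_1,\dots,s_k$; $|\mathrm{dag}(t)|$ is its number of edges. The first-child/next-sibling encoding $\mathrm{fcns}$ maps a sequence of unranked trees to a binary tree (optional left and right child): $\mathrm{fcns}(\varepsilon)$ is empty and $\mathrm{fcns}(t_1\cdots t_n)=f(\mathrm{fcns}(u_1\cdots u_m),\mathrm{fcns}(t_2\cdots t_n))$ when $t_1=f(u_1,\dots,u_m)$. Hybrid dag: for each distinct subtree $s=f(s_1,\dots,s_k)$ of $t$ with $k\ge1$ introduce a fresh symbol $A_s$ and the height-one tree $\rho_s=f(\alpha_1,\dots,\alpha_k)$, where $\alpha_i$ is the label of $s_i$ if $s_i$ is a single node and $\alpha_i=A_{s_i}$ otherwise. Let $\rho'_s$ be $\rho_s$ with root additionally marked by $A_s$. $\mathrm{hdag}(t)$ is the minimal dag of the forest of binary trees $\mathrm{fcns}(\rho'_s)$ (identical subtrees merged), and $|\mathrm{hdag}(t)|$ its number of edges, not counting edges to absent children. *)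

theory Defs
  imports Complex_Main
begin

datatype 'a utree = UNode (label: 'a) (children: "'a utree list")

fun subtrees :: "'a utree \<Rightarrow> 'a utree set" where
  "subtrees (UNode f ts) = insert (UNode f ts) (\<Union>t\<in>set ts. subtrees t)"

fun labels :: "'a utree \<Rightarrow> 'a set" where
  "labels (UNode f ts) = insert f (\<Union>t\<in>set ts. labels t)"

text \<open>Number of edges of the minimal dag: one node per distinct subtree,
  each with as many (ordered) edges as it has children.\<close>
definition dag_size :: "'a utree \<Rightarrow> nat" where
  "dag_size t = (\<Sum>s\<in>subtrees t. length (children s))"

datatype 'b btree = BNode 'b "'b btree option" "'b btree option"

text \<open>First-child/next-sibling encoding of a sequence of unranked trees.\<close>
fun fcns :: "'a utree list \<Rightarrow> 'a btree option" where
  "fcns [] = None"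
| "fcns (UNode f us # ts) = Some (BNode f (fcns us) (fcns ts))"

fun bsubtrees :: "'b btree \<Rightarrow> 'b btree set" where
  "bsubtrees (BNode x l r) = insert (BNode x l r)
      ((\<Union>c\<in>set_option l. bsubtrees c) \<union> (\<Union>c\<in>set_option r. bsubtrees c))"

fun bedges :: "'b btree \<Rightarrow> nat" where
  "bedges (BNode x l r) = (if l = None then 0 else 1) + (if r = None then 0 else 1)"

text \<open>Labels of the hybrid-dag rules: an original symbol, a fresh nonterminal
  \<open>A_s\<close>, or an original symbol \<open>f\<close> at a root additionally marked by \<open>A_s\<close>.\<close>
datatype 'a hlab = Sym 'a | NT "'a utree" | Marked 'a "'a utree"

definition alpha :: "'a utree \<Rightarrow> 'a hlab" where
  "alpha c = (if children c = [] then Sym (label c) else NT c)"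

definition rho' :: "'a utree \<Rightarrow> 'a hlab utree" where
  "rho' s = UNode (Marked (label s) s) (map (\<lambda>c. UNode (alpha c) []) (children s))"

definition hdag_nodes :: "'a utree \<Rightarrow> 'a hlab btree set" where
  "hdag_nodes t = (\<Union>s\<in>{s\<in>subtrees t. children s \<noteq> []}. \<Union>b\<in>set_option (fcns [rho' s]). bsubtrees b)"

definition hdag_size :: "'a utree \<Rightarrow> nat" where
  "hdag_size t = (\<Sum>b\<in>hdag_nodes t. bedges b)"

end

theory Submission
  imports Defs
begin

text \<open>Let \<open>stair b 0\<close> have \<open>b\<close> leaf children and let \<open>stair b (i+1)\<close> have
  children \<open>stair b i\<close> followed by the children of \<open>stair b i\<close>. The distinct subtrees
  of \<open>stair b c\<close> are a leaf and \<open>stair b 0, \<dots>, stair b c\<close>, so its dag has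
  \<open>\<Sum>j\<le>c. j + b\<close> edges, quadratic in \<open>c\<close>. In the hybrid dag the child list of
  \<open>stair b j\<close> becomes a right spine of leaves in the first-child/next-sibling encoding,
  and each such spine is a suffix of the longest one, so all of them are shared: the
  hybrid dag has only \<open>(c + 1) + (c + b - 1)\<close> edges. For \<open>s n = stair n n\<close> this gives
  \<open>|dag| = 3n(n+1)/2 > (3n)\<^sup>2/6\<close>.\<close>

fun bspine :: "'b list \<Rightarrow> 'b btree option" where
  "bspine [] = None"
| "bspine (x # xs) = Some (BNode x None (bspine xs))"

definition bspine_nodes :: "'b list \<Rightarrow> 'b btree set" where
  "bspine_nodes xs = (\<Union>c\<in>set_option (bspine xs). bsubtrees c)"

fun spine_length :: "'b btree \<Rightarrow> nat" where
  "spine_length (BNode x l r) = 1 + (case r of None \<Rightarrow> 0 | Some r' \<Rightarrow> spine_length r')"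

fun blabel :: "'b btree \<Rightarrow> 'b" where
  "blabel (BNode x l r) = x"

lemma fcns_map_leaves: "fcns (map (\<lambda>c. UNode (f c) []) xs) = bspine (map f xs)"
  by (induction xs) auto

lemma bspine_eq_None_iff: "bspine xs = None \<longleftrightarrow> xs = []"
  by (cases xs) auto

lemma bspine_nodes_Nil [simp]: "bspine_nodes [] = {}"
  by (simp add: bspine_nodes_def)

lemma bspine_nodes_Cons [simp]:
  "bspine_nodes (x # xs) = insert (BNode x None (bspine xs)) (bspine_nodes xs)"
  by (simp add: bspine_nodes_def)

lemma finite_bspine_nodes [simp]: "finite (bspine_nodes xs)"
  by (induction xs) auto

lemma bspine_nodes_append: "bspine_nodes xs \<subseteq> bspine_nodes (ys @ xs)"
  by (induction ys) auto

lemma spine_length_bspine: "(case bspine xs of None \<Rightarrow> 0 | Some r \<Rightarrow> spine_length r) = length xs"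
  by (induction xs) auto

lemma spine_length_le_if_bspine_node: "t \<in> bspine_nodes xs \<Longrightarrow> spine_length t \<le> length xs"
  by (induction xs) (auto simp: spine_length_bspine)

lemma blabel_bspine_node: "t \<in> bspine_nodes xs \<Longrightarrow> blabel t \<in> set xs"
  by (induction xs) auto

lemma sum_bedges_bspine_nodes: "(\<Sum>t\<in>bspine_nodes xs. bedges t) = length xs - 1"
proof (induction xs)
  case Nil
  then show ?case by simp
next
  case (Cons x xs)
  have "BNode x None (bspine xs) \<notin> bspine_nodes xs"
    using spine_length_le_if_bspine_node spine_length_bspine[of xs] by fastforce
  with Cons show ?case
    by (cases xs) (auto simp: bspine_eq_None_iff)
qed

abbreviation leaf :: "nat utree" where
  "leaf \<equiv> UNode 0 []"

fun stair_children :: "nat \<Rightarrow> nat \<Rightarrow> nat utree list" where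
  "stair_children b 0 = replicate b leaf"
| "stair_children b (Suc i) = UNode 1 (stair_children b i) # stair_children b i"

definition stair :: "nat \<Rightarrow> nat \<Rightarrow> nat utree" where
  "stair b i = UNode 1 (stair_children b i)"

lemma children_stair [simp]: "children (stair b i) = stair_children b i"
  and label_stair [simp]: "label (stair b i) = 1"
  by (simp_all add: stair_def)

lemma stair_children_Suc_stair: "stair_children b (Suc i) = stair b i # stair_children b i"
  by (simp add: stair_def)

lemma length_stair_children [simp]: "length (stair_children b i) = i + b"
  by (induction i) auto

lemma stair_children_ne_Nil: "b > 0 \<Longrightarrow> stair_children b i \<noteq> []"
  by (metis length_stair_children add_is_0 list.size(3) not_gr0)

lemma stair_inject: "stair b i = stair b j \<Longrightarrow> i = j"
  unfolding stair_def by (metis length_stair_children add_right_cancel utree.inject)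

lemma inj_on_stair: "inj_on (stair b) A"
  by (meson inj_onI stair_inject)

lemma stair_children_suffix: "j \<le> c \<Longrightarrow> \<exists>ys. stair_children b c = ys @ stair_children b j"
proof (induction c rule: dec_induct)
  case base
  then show ?case by simp
next
  case (step c)
  then show ?case by (metis append_Cons stair_children.simps(2))
qed

lemma labels_stair: "labels (stair b i) \<subseteq> {0, 1}"
proof -
  have "\<forall>t\<in>set (stair_children b i). labels t \<subseteq> {0, 1}"
    by (induction i) auto
  then show ?thesis by (auto simp: stair_def)
qed

lemma subtrees_stair_children:
  "b > 0 \<Longrightarrow> (\<Union>t\<in>set (stair_children b i). subtrees t) = insert leaf (stair b ` {..<i})"
  by (induction i) (auto simp: stair_children_Suc_stair lessThan_Suc, auto simp: stair_def)

lemma subtrees_stair: "b > 0 \<Longrightarrow> subtrees (stair b c) = insert leaf (stair b ` {..c})"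
  using subtrees_stair_children[of b c]
  by (auto simp: stair_def[symmetric] lessThan_Suc_atMost[symmetric] lessThan_Suc,
      auto simp: stair_def)

lemma dag_size_stair: "b > 0 \<Longrightarrow> dag_size (stair b c) = (\<Sum>j\<le>c. j + b)"
proof -
  assume "b > 0"
  have "leaf \<notin> stair b ` {..c}"
    by (auto simp: stair_def)
  then have "dag_size (stair b c) = (\<Sum>s\<in>stair b ` {..c}. length (children s))"
    by (simp add: dag_size_def subtrees_stair[OF \<open>b > 0\<close>])
  then show ?thesis
    by (simp add: sum.reindex[OF inj_on_stair])
qed

lemma double_sum_atMost_add: "2 * (\<Sum>j\<le>c. j + b) = c * (c + 1) + 2 * (c + 1) * (b::nat)"
  by (induction c) (auto simp: algebra_simps)

definition alpha_list :: "nat \<Rightarrow> nat \<Rightarrow> nat hlab list" where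
  "alpha_list b j = map alpha (stair_children b j)"

definition stair_rule :: "nat \<Rightarrow> nat \<Rightarrow> nat hlab btree" where
  "stair_rule b j = BNode (Marked 1 (stair b j)) (bspine (alpha_list b j)) None"

lemma fcns_rho'_stair: "fcns [rho' (stair b j)] = Some (stair_rule b j)"
  by (simp add: rho'_def fcns_map_leaves stair_rule_def alpha_list_def)

lemma alpha_list_suffix_nodes:
  assumes "j \<le> c"
  shows "bspine_nodes (alpha_list b j) \<subseteq> bspine_nodes (alpha_list b c)"
proof -
  obtain ys where "stair_children b c = ys @ stair_children b j"
    using stair_children_suffix[OF assms] by blast
  then show ?thesis
    by (simp add: alpha_list_def bspine_nodes_append)
qed

lemma hdag_nodes_stair:
  assumes "b > 0"
  shows "hdag_nodes (stair b c) = stair_rule b ` {..c} \<union> bspine_nodes (alpha_list b c)"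
proof -
  have "{s\<in>subtrees (stair b c). children s \<noteq> []} = stair b ` {..c}"
    using assms by (auto simp: subtrees_stair stair_children_ne_Nil)
  then have "hdag_nodes (stair b c) =
      (\<Union>j\<le>c. insert (stair_rule b j) (bspine_nodes (alpha_list b j)))"
    by (simp add: hdag_nodes_def fcns_rho'_stair stair_rule_def bspine_nodes_def)
  then show ?thesis
    using alpha_list_suffix_nodes[of _ c b] by blast
qed

text \<open>The rule roots carry a \<open>Marked\<close> label, which \<open>alpha\<close> never produces, so
  they are not shared with the spine nodes.\<close>

lemma stair_rules_disjoint_bspine_nodes:
  "stair_rule b ` A \<inter> bspine_nodes (alpha_list b c) = {}"
proof -
  have "blabel (stair_rule b j) \<notin> set (alpha_list b c)" for j
    by (auto simp: stair_rule_def alpha_list_def alpha_def)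
  then show ?thesis
    using blabel_bspine_node by blast
qed

lemma hdag_size_stair: "b > 0 \<Longrightarrow> hdag_size (stair b c) = 2 * c + b"
proof -
  assume "b > 0"
  have inj: "inj_on (stair_rule b) {..c}"
    by (rule inj_onI) (auto simp: stair_rule_def dest: stair_inject)
  have one_edge: "bedges (stair_rule b j) = 1" for j
    using \<open>b > 0\<close>
    by (simp add: stair_rule_def bspine_eq_None_iff alpha_list_def stair_children_ne_Nil)
  have "hdag_size (stair b c) =
      (\<Sum>t\<in>stair_rule b ` {..c}. bedges t) + (\<Sum>t\<in>bspine_nodes (alpha_list b c). bedges t)"
    unfolding hdag_size_def hdag_nodes_stair[OF \<open>b > 0\<close>]
    by (rule sum.union_disjoint) (simp_all add: stair_rules_disjoint_bspine_nodes)
  also have "\<dots> = (c + 1) + (c + b - 1)"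
    by (simp add: sum.reindex[OF inj] one_edge sum_bedges_bspine_nodes alpha_list_def)
  finally show ?thesis
    using \<open>b > 0\<close> by simp
qed

lemma dag_size_vs_hdag_size_stair:
  assumes "n > 0"
  shows "real (dag_size (stair n n)) > (1/6) * (real (hdag_size (stair n n)))\<^sup>2"
proof -
  have "2 * dag_size (stair n n) = 3 * n * n + 3 * n"
    using double_sum_atMost_add[of n n] dag_size_stair[OF assms, of n]
    by (simp add: algebra_simps)
  then have "real (dag_size (stair n n)) = (3 * real n * real n + 3 * real n) / 2"
    by (metis (mono_tags) of_nat_mult of_nat_add of_nat_numeral nonzero_mult_div_cancel_left
        zero_neq_numeral)
  moreover have "hdag_size (stair n n) = 3 * n"
    using hdag_size_stair[OF assms, of n] by simp
  ultimately show ?thesis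
    using assms by (simp add: power2_eq_square)
qed

theorem theorem3:
  shows "\<exists>(\<Sigma>::nat set) (s::nat \<Rightarrow> nat utree).
           finite \<Sigma> \<and> (\<forall>n\<ge>1. labels (s n) \<subseteq> \<Sigma>) \<and> inj_on s {1..} \<and>
           (\<forall>n\<ge>1. real (dag_size (s n)) > (1/6) * (real (hdag_size (s n)))^2)"
proof (intro exI conjI)
  show "finite {0::nat, 1}"
    by simp
  show "\<forall>n\<ge>1. labels (stair n n) \<subseteq> {0, 1}"
    using labels_stair by blast
  show "inj_on (\<lambda>n. stair n n) {1..}"
    by (rule inj_onI) (auto simp: stair_def dest!: arg_cong[where f = length])
  show "\<forall>n\<ge>1. real (dag_size (stair n n)) > (1/6) * (real (hdag_size (stair n n)))^2"
    using dag_size_vs_hdag_size_stair by simp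
qed

end
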